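(* Let $p$ be a prime, $R$ an $F$-pure ring of characteristic $p$, and $f\in R$ a non-zero non-unit. Let $d\ge1$ and $\alpha\in[0,1]\cap\frac{1}{p^d}\mathbb{N}$. If for some $e\ge1$ the inclusion $R\cdot f^{\lceil p^e\alpha\rceil/p^e}\subseteq R^{1/p^e}$ splits over $R$, then the inclusion $R\cdot f^{\alpha}\subseteq R^{1/p^d}$ splits over $R$.
   Context: A ring $R$ of characteristic $p$ is $F$-pure if $R\subseteq R^{1/p}$ splits as a map of $R$-modules; such a ring is reduced. Roots. $R^{1/p^e}$ is the ring of formal symbols $r^{1/p^e}$ ($r\in R$), with $r^{1/p^e}+s^{1/p^e}=(r+s)^{1/p^e}$ and $r^{1/p^e}s^{1/p^e}=(rs)^{1/p^e}$. It contains $R$ via $r\mapsto(r^{p^e})^{1/p^e}$. Powers of $f$. For $a\in\mathbb{N}$, $f^{a/p^e}:=(f^a)^{1/p^e}$; in particular $f^\alpha=f^{a/p^d}$ when $\alpha=a/p^d$. Splitting. The inclusion $R\cdot t\subseteq R^{1/p^e}$ splits over $R$ if some $R$-linear $\theta:R^{1/p^e}\to R$ has $\theta(t)=1$. *)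

theory Defs
  imports Complex_Main "HOL-Computational_Algebra.Primes"
begin

text \<open>The ring R is modelled as the whole type 'a. The module R^{1/p^e} of formal
symbols r^{1/p^e} is, as an additive group, a copy of R (r^{1/p^e} corresponds to r),
with R acting by  s . r^{1/p^e} = (s^{p^e} r)^{1/p^e}. Hence an R-linear map
R^{1/p^e} -> R is an additive map th : 'a -> 'a with th (s^(p^e) * r) = s * th r.\<close>

definition root_linear :: "nat \<Rightarrow> nat \<Rightarrow> ('a::comm_ring_1 \<Rightarrow> 'a) \<Rightarrow> bool" where
  "root_linear p e th \<longleftrightarrow>
     (\<forall>x y. th (x + y) = th x + th y) \<and> (\<forall>s r. th (s ^ (p ^ e) * r) = s * th r)"

text \<open>F-purity: the inclusion R \<subseteq> R^{1/p}, r \<mapsto> (r^p)^{1/p}, splits over R.\<close>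
definition F_pure :: "nat \<Rightarrow> 'a::comm_ring_1 itself \<Rightarrow> bool" where
  "F_pure p _ \<longleftrightarrow> (\<exists>th :: 'a \<Rightarrow> 'a. root_linear p 1 th \<and> (\<forall>r. th (r ^ p) = r))"

text \<open>The inclusion R \<cdot> t^{1/p^e} \<subseteq> R^{1/p^e} splits over R
 (t^{1/p^e} represented by t).\<close>
definition splits_root :: "nat \<Rightarrow> nat \<Rightarrow> 'a::comm_ring_1 \<Rightarrow> bool" where
  "splits_root p e t \<longleftrightarrow> (\<exists>th. root_linear p e th \<and> th t = 1)"

end

theory Submission
  imports Defs
begin

text \<open>A splitting \<open>\<phi>\<close> of \<open>f^b\<close> at level \<open>e\<close>, where \<open>b = \<lceil>p^e \<alpha>\<rceil>\<close>, is first pushed up to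
level \<open>e + d\<close> by composing with the \<open>d\<close>-fold iterate of an F-splitting; it then splits
\<open>(f^b)^{p^d}\<close>. Since \<open>a p^e \<le> b p^d\<close>, the element \<open>(f^a)^{p^e}\<close> divides \<open>(f^b)^{p^d}\<close>, so
precomposing with multiplication by the cofactor splits \<open>(f^a)^{p^e}\<close> at level \<open>d + e\<close>.
Finally precomposing with the \<open>p^e\<close>-th power map, which is additive in characteristic \<open>p\<close>,
brings this back to a splitting of \<open>f^a\<close> at level \<open>d\<close>.\<close>

lemma root_linear_comp:
  fixes \<phi> \<theta> :: "'a::comm_ring_1 \<Rightarrow> 'a"
  assumes "root_linear p e \<phi>" and "root_linear p k \<theta>"
  shows "root_linear p (e + k) (\<phi> \<circ> \<theta>)"
  unfolding root_linear_def
proof (intro conjI allI)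
  fix x y :: 'a show "(\<phi> \<circ> \<theta>) (x + y) = (\<phi> \<circ> \<theta>) x + (\<phi> \<circ> \<theta>) y"
    using assms by (simp add: root_linear_def)
next
  fix s r :: 'a
  have "s ^ p ^ (e + k) = (s ^ p ^ e) ^ p ^ k"
    by (simp add: power_add power_mult)
  then show "(\<phi> \<circ> \<theta>) (s ^ p ^ (e + k) * r) = s * (\<phi> \<circ> \<theta>) r"
    using assms by (simp add: root_linear_def)
qed

lemma root_linear_funpow:
  fixes \<theta> :: "'a::comm_ring_1 \<Rightarrow> 'a"
  assumes "root_linear p 1 \<theta>"
  shows "root_linear p k (\<theta> ^^ k)"
proof (induction k)
  case 0
  then show ?case by (simp add: root_linear_def)
next
  case (Suc k)
  have "root_linear p (k + 1) (\<theta> ^^ k \<circ> \<theta>)"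
    by (rule root_linear_comp[OF Suc.IH assms])
  then show ?case
    by (simp only: funpow_Suc_right Suc_eq_plus1[symmetric])
qed

lemma root_linear_mult_left:
  fixes \<phi> :: "'a::comm_ring_1 \<Rightarrow> 'a"
  assumes "root_linear p e \<phi>"
  shows "root_linear p e (\<lambda>r. \<phi> (c * r))"
  unfolding root_linear_def
proof (intro conjI allI)
  fix x y :: 'a show "\<phi> (c * (x + y)) = \<phi> (c * x) + \<phi> (c * y)"
    using assms by (simp add: root_linear_def distrib_left)
next
  fix s r :: 'a
  have "\<phi> (c * (s ^ p ^ e * r)) = \<phi> (s ^ p ^ e * (c * r))"
    by (simp add: ac_simps)
  also have "\<dots> = s * \<phi> (c * r)"
    using assms by (simp add: root_linear_def)
  finally show "\<phi> (c * (s ^ p ^ e * r)) = s * \<phi> (c * r)" .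
qed

lemma root_linear_comp_frobenius:
  fixes \<phi> :: "'a::comm_ring_1 \<Rightarrow> 'a"
  assumes "prime p" and "CHAR('a) = p" and "root_linear p (d + m) \<phi>"
  shows "root_linear p d (\<lambda>r. \<phi> (r ^ p ^ m))"
  unfolding root_linear_def
proof (intro conjI allI)
  fix x y :: 'a
  have "(x + y) ^ p ^ m = x ^ p ^ m + y ^ p ^ m"
    using assms(1,2) by (intro freshmans_dream') simp_all
  then show "\<phi> ((x + y) ^ p ^ m) = \<phi> (x ^ p ^ m) + \<phi> (y ^ p ^ m)"
    using assms(3) by (simp add: root_linear_def)
next
  fix s r :: 'a
  have "(s ^ p ^ d * r) ^ p ^ m = s ^ p ^ (d + m) * r ^ p ^ m"
    by (simp add: power_mult_distrib power_add power_mult)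
  then show "\<phi> ((s ^ p ^ d * r) ^ p ^ m) = s * \<phi> (r ^ p ^ m)"
    using assms(3) by (simp add: root_linear_def)
qed

lemma F_pure_iterate:
  assumes "F_pure p TYPE('a)"
  obtains \<theta> :: "'a::comm_ring_1 \<Rightarrow> 'a" where "root_linear p k \<theta>" and "\<And>r. \<theta> (r ^ p ^ k) = r"
proof -
  obtain \<theta> :: "'a \<Rightarrow> 'a" where \<theta>: "root_linear p 1 \<theta>" "\<And>r. \<theta> (r ^ p) = r"
    using assms unfolding F_pure_def by blast
  have "(\<theta> ^^ k) (r ^ p ^ k) = r" for r
  proof (induction k arbitrary: r)
    case (Suc k)
    have "r ^ p ^ Suc k = (r ^ p ^ k) ^ p"
      by (simp add: power_mult[symmetric] mult.commute)
    then show ?case using Suc \<theta>(2) by (simp add: funpow_Suc_right del: funpow.simps)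
  qed simp
  then show thesis using that root_linear_funpow[OF \<theta>(1)] by blast
qed

lemma splits_root_power_of_F_pure:
  assumes "F_pure p TYPE('a::comm_ring_1)" and "splits_root p e (t :: 'a)"
  shows "splits_root p (e + k) (t ^ p ^ k)"
proof -
  obtain \<phi> where \<phi>: "root_linear p e \<phi>" "\<phi> t = 1"
    using assms(2) unfolding splits_root_def by blast
  obtain \<theta> :: "'a \<Rightarrow> 'a" where \<theta>: "root_linear p k \<theta>" "\<And>r. \<theta> (r ^ p ^ k) = r"
    using F_pure_iterate[OF assms(1)] by blast
  show ?thesis
    unfolding splits_root_def using root_linear_comp[OF \<phi>(1) \<theta>(1)] \<phi>(2) \<theta>(2) by auto
qed

lemma splits_root_mult_right:
  assumes "splits_root p e (c * t :: 'a::comm_ring_1)"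
  shows "splits_root p e t"
  using assms root_linear_mult_left unfolding splits_root_def by fastforce

lemma splits_root_of_power:
  fixes t :: "'a::comm_ring_1"
  assumes "prime p" and "CHAR('a) = p" and "splits_root p (d + m) (t ^ p ^ m)"
  shows "splits_root p d t"
  using assms root_linear_comp_frobenius[OF assms(1,2)] unfolding splits_root_def by blast

lemma mult_le_nat_ceiling_mult_div:
  assumes "q > 0"
  shows "a * n \<le> nat \<lceil>real n * (real a / real q)\<rceil> * q"
proof -
  let ?b = "nat \<lceil>real n * (real a / real q)\<rceil>"
  have ceil: "real n * (real a / real q) \<le> real ?b"
    by linarith
  have "real (a * n) = real n * (real a / real q) * real q"
    using assms by simp
  also have "\<dots> \<le> real ?b * real q"
    by (rule mult_right_mono[OF ceil]) simp
  finally show ?thesis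
    by (simp only: of_nat_mult[symmetric] of_nat_le_iff)
qed

theorem mainTheorem9:
  fixes f :: "'a::comm_ring_1" and p d e a :: nat
  assumes "prime p"
    and "CHAR('a) = p"
    and "F_pure p TYPE('a)"
    and "f \<noteq> 0" and "\<not> f dvd 1"
    and "d \<ge> 1"
    and "a \<le> p ^ d"
    and "e \<ge> 1"
    and "splits_root p e (f ^ nat \<lceil>real (p ^ e) * (real a / real (p ^ d))\<rceil>)"
  shows "splits_root p d (f ^ a)"
proof -
  define b where "b = nat \<lceil>real (p ^ e) * (real a / real (p ^ d))\<rceil>"
  have "a * p ^ e \<le> b * p ^ d"
    unfolding b_def using assms(1) by (intro mult_le_nat_ceiling_mult_div) (simp add: prime_gt_0_nat)
  then have "(f ^ b) ^ p ^ d = f ^ (b * p ^ d - a * p ^ e) * (f ^ a) ^ p ^ e"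
    by (simp add: power_add[symmetric] power_mult[symmetric])
  moreover have "splits_root p (e + d) ((f ^ b) ^ p ^ d)"
    using splits_root_power_of_F_pure[OF assms(3)] assms(9) unfolding b_def by blast
  ultimately have "splits_root p (d + e) (f ^ (b * p ^ d - a * p ^ e) * (f ^ a) ^ p ^ e)"
    by (simp only: add.commute)
  then have "splits_root p (d + e) ((f ^ a) ^ p ^ e)"
    by (rule splits_root_mult_right)
  then show ?thesis
    using splits_root_of_power[OF assms(1,2)] by blast
qed

end
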